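(* Let $d_1\ge2$, let $\sigma_X,\sigma_Y\in\mathbb R^{d_1}$ be linearly independent, $k_0>0$, $k_1\in\mathbb R$, $b\in\mathbb R$ with $b\ne k_1/k_0$, $z\in\mathbb R\setminus\{0\}$, $\bar r_X\ge0$, and $[\underline c,\bar c]\subseteq[0,1]$. Then $$\inf\{\underline r_Y(z,c,b):p(z,c;\bar r_X)\ge0,\ c\in\mathbb R^{d_1},\ \|c\|\in[\underline c,\bar c],\ \|c\|<1\}$$ $$=\inf\{\underline r_Y(z,c,b):p(z,c;\bar r_X)\ge0,\ c\in\operatorname{span}\{\sigma_X,\sigma_Y\},\ \|c\|\in[\underline c,\bar c],\ \|c\|<1\}.$$
   Context: $\|\cdot\|$ Euclidean norm. $p(z,c;\bar r_X)=\bar r_X^2\|\sigma_X\sqrt{1-\|c\|^2}-zc\|^2-z^2$. For $\|c\|<1$, let $v(z,c,b)=z\sqrt{1-\|c\|^2}(\sigma_Y-b\sigma_X)-(k_1-bk_0)c$, and $\underline r_Y(z,c,b)=|k_1-bk_0|/\|v(z,c,b)\|$ if $v(z,c,b)\ne0$, $\underline r_Y(z,c,b)=+\infty$ if $v(z,c,b)=0$. (In the application, $\sigma_X=\operatorname{cov}(W_1,X)$, $\sigma_Y=\operatorname{cov}(W_1,Y)$, $k_0=\operatorname{var}(X^{\perp W_1})$, $k_1=\operatorname{cov}(Y^{\perp W_1},X^{\perp W_1})$.) *)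

theory Defs
  imports "HOL-Analysis.Analysis" "HOL-Library.Extended_Real"
begin

definition p_fun :: "real ^ 'd \<Rightarrow> real \<Rightarrow> real ^ 'd \<Rightarrow> real \<Rightarrow> real" where
  "p_fun sX z c rX = rX^2 * (norm (sqrt (1 - (norm c)^2) *\<^sub>R sX - z *\<^sub>R c))^2 - z^2"

definition v_fun :: "real ^ 'd \<Rightarrow> real ^ 'd \<Rightarrow> real \<Rightarrow> real \<Rightarrow> real \<Rightarrow> real ^ 'd \<Rightarrow> real \<Rightarrow> real ^ 'd" where
  "v_fun sX sY k0 k1 z c b =
     (z * sqrt (1 - (norm c)^2)) *\<^sub>R (sY - b *\<^sub>R sX) - (k1 - b * k0) *\<^sub>R c"

definition rY_lower :: "real ^ 'd \<Rightarrow> real ^ 'd \<Rightarrow> real \<Rightarrow> real \<Rightarrow> real \<Rightarrow> real ^ 'd \<Rightarrow> real \<Rightarrow> ereal" where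
  "rY_lower sX sY k0 k1 z c b =
     (if v_fun sX sY k0 k1 z c b = 0 then \<infinity>
      else ereal (\<bar>k1 - b * k0\<bar> / norm (v_fun sX sY k0 k1 z c b)))"

end

theory Submission
  imports Defs
begin

text \<open>Both \<open>p\<close> and \<open>\<underline>r\<^sub>Y\<close> depend on \<open>c\<close> only through \<open>\<parallel>c\<parallel>\<close>, \<open>\<langle>\<sigma>\<^sub>X,c\<rangle>\<close> and
  \<open>\<langle>\<sigma>\<^sub>Y,c\<rangle>\<close>. Projecting \<open>c\<close> orthogonally onto \<open>span {\<sigma>\<^sub>X,\<sigma>\<^sub>Y}\<close> keeps the two inner products
  and shrinks the norm; moving the projection along the direction of the plane orthogonal to
  \<open>\<sigma>\<^sub>X\<close> restores the norm and shifts only \<open>\<langle>\<sigma>\<^sub>Y,c\<rangle>\<close>, with a sign we may choose. Choosing it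
  so that \<open>\<parallel>v\<parallel>\<close> does not decrease yields a point of the plane with the same \<open>p\<close> and no larger
  \<open>\<underline>r\<^sub>Y\<close>, so restricting to the plane does not change the infimum.\<close>

lemma exists_nonneg_scaleR_norm_eq:
  fixes p e :: "'a::real_normed_vector"
  assumes "norm p \<le> r" and "e \<noteq> 0"
  shows "\<exists>t\<ge>0. norm (p + t *\<^sub>R e) = r"
proof -
  define T where "T = (r + norm p) / norm e"
  have "0 \<le> r + norm p"
    using assms(1) norm_ge_zero[of p] by linarith
  then have "T \<ge> 0"
    by (simp add: T_def)
  have "r = T * norm e - norm p"
    using assms by (simp add: T_def)
  also have "\<dots> \<le> norm (p + T *\<^sub>R e)"
    using norm_triangle_ineq4[of "p + T *\<^sub>R e" p] \<open>T \<ge> 0\<close> by simp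
  finally have "r \<le> norm (p + T *\<^sub>R e)" .
  moreover have "continuous_on {0..T} (\<lambda>t. norm (p + t *\<^sub>R e))"
    by (intro continuous_intros)
  ultimately show ?thesis
    using IVT'[of "\<lambda>t. norm (p + t *\<^sub>R e)" 0 r T] assms(1) \<open>T \<ge> 0\<close> by auto
qed

lemma span_pair_orthogonal_direction:
  fixes x y :: "'a::real_inner"
  assumes "independent {x, y}" and "x \<noteq> y"
  obtains d where "d \<in> span {x, y}" and "inner x d = 0" and "inner y d > 0"
proof
  define d where "d = y - (inner y x / inner x x) *\<^sub>R x"
  have "x \<noteq> 0"
    using assms(1) dependent_zero by blast
  then show "inner x d = 0"
    by (simp add: d_def inner_diff_right inner_commute)
  then have "inner y d = inner d d"
    by (simp add: d_def inner_diff_left)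
  moreover have "d \<noteq> 0"
  proof
    assume "d = 0"
    then have "y \<in> span {x}"
      by (metis d_def eq_iff_diff_eq_0 span_base span_scale singletonI)
    moreover have "{x, y} - {y} = {x}"
      using assms(2) by auto
    ultimately have "y \<in> span ({x, y} - {y})"
      by simp
    with assms(1) show False
      using dependent_def by blast
  qed
  ultimately show "inner y d > 0"
    by simp
  show "d \<in> span {x, y}"
    by (simp add: d_def span_base span_diff span_scale)
qed

lemma span_pair_point_shifting_inner:
  fixes x y c :: "'a::euclidean_space"
  assumes "independent {x, y}" and "x \<noteq> y"
  shows "\<exists>c'\<in>span {x, y}. norm c' = norm c \<and> inner x c' = inner x c \<and>
           \<kappa> * inner y c' \<le> \<kappa> * inner y c"
proof -
  obtain q r where q: "q \<in> span {x, y}" and r: "\<And>w. w \<in> span {x, y} \<Longrightarrow> orthogonal r w"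
    and c: "c = q + r"
    using orthogonal_subspace_decomp_exists by blast
  have inner_q: "inner w q = inner w c" if "w \<in> {x, y}" for w
    using r[of w] that by (simp add: c inner_add_right orthogonal_def inner_commute span_base)
  have "(norm c)\<^sup>2 = (norm q)\<^sup>2 + (norm r)\<^sup>2"
    using r[OF q] by (simp add: c norm_add_Pythagorean orthogonal_commute)
  then have "(norm q)\<^sup>2 \<le> (norm c)\<^sup>2"
    by simp
  then have "norm q \<le> norm c"
    by (rule power2_le_imp_le) simp
  obtain d where d: "d \<in> span {x, y}" "inner x d = 0" "inner y d > 0"
    using span_pair_orthogonal_direction[OF assms] by blast
  define e where "e = (if \<kappa> \<ge> 0 then - d else d)"
  have "e \<noteq> 0" and "\<kappa> * inner y e \<le> 0"
    using d(3) by (auto simp: e_def mult_le_0_iff)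
  obtain t where "t \<ge> 0" and t: "norm (q + t *\<^sub>R e) = norm c"
    using exists_nonneg_scaleR_norm_eq[OF \<open>norm q \<le> norm c\<close> \<open>e \<noteq> 0\<close>] by blast
  have "\<kappa> * inner y (q + t *\<^sub>R e) = \<kappa> * inner y c + t * (\<kappa> * inner y e)"
    using inner_q[of y] by (simp add: inner_add_right algebra_simps)
  also have "\<dots> \<le> \<kappa> * inner y c"
    using \<open>t \<ge> 0\<close> \<open>\<kappa> * inner y e \<le> 0\<close> by (simp add: mult_nonneg_nonpos)
  finally have "\<kappa> * inner y (q + t *\<^sub>R e) \<le> \<kappa> * inner y c" .
  moreover have "q + t *\<^sub>R e \<in> span {x, y}"
    using q d(1) by (simp add: e_def span_add span_scale span_neg)
  moreover have "inner x (q + t *\<^sub>R e) = inner x c"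
    using inner_q[of x] d(2) by (simp add: e_def inner_add_right)
  ultimately show ?thesis
    using t by blast
qed

lemma power2_norm_scaleR_diff:
  fixes u w :: "'a::real_inner"
  shows "(norm (\<alpha> *\<^sub>R u - \<beta> *\<^sub>R w))\<^sup>2
    = \<alpha>\<^sup>2 * inner u u - 2 * \<alpha> * \<beta> * inner u w + \<beta>\<^sup>2 * inner w w"
  unfolding power2_norm_eq_inner
  by (simp add: inner_diff_left inner_diff_right inner_commute power2_eq_square algebra_simps)

lemma p_fun_cong:
  assumes "norm c' = norm c" and "inner sX c' = inner sX c"
  shows "p_fun sX z c' rX = p_fun sX z c rX"
  using assms by (simp add: p_fun_def power2_norm_scaleR_diff power2_norm_eq_inner[symmetric])

lemma norm_v_fun_le:
  assumes "norm c' = norm c" and "inner sX c' = inner sX c"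
    and "(z * sqrt (1 - (norm c)\<^sup>2) * (k1 - b * k0)) * inner sY c'
         \<le> (z * sqrt (1 - (norm c)\<^sup>2) * (k1 - b * k0)) * inner sY c"
  shows "norm (v_fun sX sY k0 k1 z c b) \<le> norm (v_fun sX sY k0 k1 z c' b)"
proof -
  define s where "s = z * sqrt (1 - (norm c)\<^sup>2)"
  define \<kappa> where "\<kappa> = k1 - b * k0"
  have expand: "(norm (v_fun sX sY k0 k1 z w b))\<^sup>2
      = s\<^sup>2 * inner (sY - b *\<^sub>R sX) (sY - b *\<^sub>R sX) - 2 * s * \<kappa> * (inner sY w - b * inner sX w)
        + \<kappa>\<^sup>2 * (norm c)\<^sup>2" if "norm w = norm c" for w
    unfolding v_fun_def power2_norm_scaleR_diff that s_def[symmetric] \<kappa>_def[symmetric]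
    by (simp add: power2_norm_eq_inner[symmetric] that inner_diff_left)
  have "s * \<kappa> * inner sY c' \<le> s * \<kappa> * inner sY c"
    using assms(3) by (simp add: s_def \<kappa>_def)
  then have "s * \<kappa> * (inner sY c' - b * inner sX c') \<le> s * \<kappa> * (inner sY c - b * inner sX c)"
    using assms(2) by (simp add: right_diff_distrib)
  then have "(norm (v_fun sX sY k0 k1 z c b))\<^sup>2 \<le> (norm (v_fun sX sY k0 k1 z c' b))\<^sup>2"
    unfolding expand[OF refl] expand[OF assms(1)] by linarith
  then show ?thesis
    by (rule power2_le_imp_le) simp
qed

lemma rY_lower_antimono:
  assumes "norm (v_fun sX sY k0 k1 z c b) \<le> norm (v_fun sX sY k0 k1 z c' b)"
  shows "rY_lower sX sY k0 k1 z c' b \<le> rY_lower sX sY k0 k1 z c b"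
  using assms by (auto simp: rY_lower_def intro!: divide_left_mono)

lemma exists_span_pair_point_le_rY_lower:
  fixes sX sY c :: "real ^ 'd"
  assumes "independent {sX, sY}" and "sX \<noteq> sY"
  shows "\<exists>c'\<in>span {sX, sY}. norm c' = norm c \<and> p_fun sX z c' rX = p_fun sX z c rX \<and>
           rY_lower sX sY k0 k1 z c' b \<le> rY_lower sX sY k0 k1 z c b"
proof -
  obtain c' where "c' \<in> span {sX, sY}" "norm c' = norm c" "inner sX c' = inner sX c"
    "(z * sqrt (1 - (norm c)\<^sup>2) * (k1 - b * k0)) * inner sY c'
     \<le> (z * sqrt (1 - (norm c)\<^sup>2) * (k1 - b * k0)) * inner sY c"
    using span_pair_point_shifting_inner[OF assms] by blast
  then show ?thesis
    using p_fun_cong rY_lower_antimono[OF norm_v_fun_le] by blast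
qed

theorem mainTheorem16:
  fixes sX sY :: "real ^ 'd" and k0 k1 b z rX cl cu :: real
  assumes "CARD('d) \<ge> 2"
    and "independent {sX, sY}" and "sX \<noteq> sY"
    and "k0 > 0" and "b \<noteq> k1 / k0" and "z \<noteq> 0" and "rX \<ge> 0"
    and "0 \<le> cl" and "cl \<le> cu" and "cu \<le> 1"
  shows "(INF c \<in> {c :: real ^ 'd. p_fun sX z c rX \<ge> 0 \<and> cl \<le> norm c \<and> norm c \<le> cu \<and> norm c < 1}.
            rY_lower sX sY k0 k1 z c b)
       = (INF c \<in> {c \<in> span {sX, sY}. p_fun sX z c rX \<ge> 0 \<and> cl \<le> norm c \<and> norm c \<le> cu \<and> norm c < 1}.
            rY_lower sX sY k0 k1 z c b)"
    (is "(INF c \<in> ?All. ?r c) = (INF c \<in> ?Plane. ?r c)")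
proof (rule antisym)
  show "(INF c \<in> ?All. ?r c) \<le> (INF c \<in> ?Plane. ?r c)"
    by (rule INF_superset_mono) auto
  show "(INF c \<in> ?Plane. ?r c) \<le> (INF c \<in> ?All. ?r c)"
  proof (rule INF_mono)
    fix c assume "c \<in> ?All"
    then show "\<exists>c'\<in>?Plane. ?r c' \<le> ?r c"
      using exists_span_pair_point_le_rY_lower[OF assms(2,3), of c z rX k0 k1 b] by force
  qed
qed

end
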